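(* Let $X$ be a strongly $0$-dimensional metrizable space with $\operatorname{card}(X)\le\mathfrak{c}$. Then for every $d\in\mathrm{Met}(X)$ and every $\epsilon\in(0,\infty)$ there exists $e\in\mathrm{LI}(X)$ with $\mathcal{D}_X(d,e)\le\epsilon$; that is, $\mathrm{LI}(X)$ is dense in $(\mathrm{Met}(X),\mathcal{D}_X)$. Moreover, if $X$ is completely metrizable, then $e$ can be chosen to be a complete metric.
   Context: For a topological space $X$ and $S\subseteq[0,\infty)$ with $0\in S$, $\mathrm{Met}(X;S)$ denotes the set of all metrics on $X$ taking values in $S$ and generating the topology of $X$; $\mathrm{Met}(X)=\mathrm{Met}(X;[0,\infty))$. The supremum metric on $\mathrm{Met}(X)$ is $\mathcal{D}_X(d,e)=\sup_{x,y\in X}|d(x,y)-e(x,y)|$ (a metric with values in $[0,\infty]$), and $\mathrm{Met}(X)$ carries the topology generated by its open balls. $\mathfrak{c}$ is the cardinality of the continuum. A topological space is strongly $0$-dimensional if for every pair $A,B$ of disjoint closed subsets there is a clopen set $V$ with $A\subseteq V$ and $V\cap B=\emptyset$. $\mathrm{LI}(X)$ is the set of all $d\in\mathrm{Met}(X)$ such that whenever $x,y,u,v\in X$ satisfy $x\neq y$, $u\neq v$ and $\{x,y\}\neq\{u,v\}$, the two reals $d(x,y)$ and $d(u,v)$ are linearly independent over $\mathbb{Q}$. *)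

theory Defs
  imports "HOL-Analysis.Analysis" "HOL-Library.Equipollence"
begin

text \<open>Met(X): metrics on the carrier of X generating the topology of X.
  A metric is a function on 'a; only its values on topspace X matter.\<close>
definition Met :: "'a topology \<Rightarrow> ('a \<Rightarrow> 'a \<Rightarrow> real) set" where
  "Met X = {d. Metric_space (topspace X) d \<and> Metric_space.mtopology (topspace X) d = X}"

definition sup_metric_dist :: "'a topology \<Rightarrow> ('a \<Rightarrow> 'a \<Rightarrow> real) \<Rightarrow> ('a \<Rightarrow> 'a \<Rightarrow> real) \<Rightarrow> ereal" where
  "sup_metric_dist X d e = (SUP p \<in> topspace X \<times> topspace X. ereal \<bar>d (fst p) (snd p) - e (fst p) (snd p)\<bar>)"

definition strongly_zero_dimensional :: "'a topology \<Rightarrow> bool" where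
  "strongly_zero_dimensional X \<longleftrightarrow>
     (\<forall>A B. closedin X A \<and> closedin X B \<and> A \<inter> B = {} \<longrightarrow>
        (\<exists>V. openin X V \<and> closedin X V \<and> A \<subseteq> V \<and> V \<inter> B = {}))"

definition rat_lin_indep2 :: "real \<Rightarrow> real \<Rightarrow> bool" where
  "rat_lin_indep2 r s \<longleftrightarrow> (\<forall>a b :: rat. of_rat a * r + of_rat b * s = 0 \<longrightarrow> a = 0 \<and> b = 0)"

definition LI :: "'a topology \<Rightarrow> ('a \<Rightarrow> 'a \<Rightarrow> real) set" where
  "LI X = {d \<in> Met X. \<forall>x\<in>topspace X. \<forall>y\<in>topspace X. \<forall>u\<in>topspace X. \<forall>v\<in>topspace X.
            x \<noteq> y \<and> u \<noteq> v \<and> {x, y} \<noteq> {u, v} \<longrightarrow> rat_lin_indep2 (d x y) (d u v)}"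

end

theory Submission
  imports Defs "HOL-Library.Nat_Bijection"
begin

text \<open>Strong zero-dimensionality gives, for every \<open>n\<close>, a partition of \<open>X\<close> into open cells of
  \<open>d\<close>-diameter below \<open>\<epsilon>/(8(n+1))\<close>, and \<open>card X \<le> \<cc>\<close> gives an injective real labelling of points.
  The new metric is \<open>e = F + 10^-K * U\<close>. Here \<open>F\<close> is a rational-valued approximation of \<open>d\<close>
  read off on representatives of the level-0 cells, and \<open>U x y = (\<Sum>n. a\<^sub>n * 10^-(n*n))\<close>
  with digits \<open>a\<^sub>n \<in> {0,1,2}\<close>: \<open>a\<^sub>n = 0\<close> until \<open>x\<close> and \<open>y\<close> lie in different cells, and afterwards
  \<open>a\<^sub>n\<close> spells out, bit by bit, the unordered pair of labels of their cells. The cells make \<open>e\<close>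
  a metric with the topology and Cauchy sequences of \<open>d\<close>, and \<open>\<bar>d - e\<bar> \<le> \<epsilon>\<close>.
  If \<open>P * e x y + Q * e u v = 0\<close> with integers \<open>P, Q\<close>, the rationality of \<open>F\<close> makes
  \<open>\<Sum>n. (P a\<^sub>n + Q b\<^sub>n) 10^-(n*n)\<close> rational, which for bounded integer coefficients forces
  \<open>P a\<^sub>n + Q b\<^sub>n = 0\<close> eventually; as the digit sequences of distinct pairs differ infinitely often
  and keep taking both values 1 and 2, \<open>P = Q = 0\<close>. For complete metrizability, \<open>d\<close> is first
  replaced by the complete metric \<open>d + min (\<epsilon>/2) \<rho>\<close> for a complete compatible \<open>\<rho>\<close>.\<close>

section \<open>Series \<open>\<Sum>n. c n * 10^-(n*n)\<close>\<close>

lemma summable_square_powers: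
  fixes c :: "nat \<Rightarrow> real"
  assumes "\<And>n. \<bar>c n\<bar> \<le> C"
  shows "summable (\<lambda>n. c n * (1/10)^(n*n))"
proof (rule summable_comparison_test'[where g = "\<lambda>n. C * (1/10)^n" and N = 0])
  show "summable (\<lambda>n. C * (1/10::real)^n)"
    by (intro summable_mult summable_geometric) auto
  fix n
  have "(1/10::real)^(n*n) \<le> (1/10)^n"
    by (rule power_decreasing) (auto simp: le_square)
  then show "norm (c n * (1/10)^(n*n)) \<le> C * (1/10)^n"
    unfolding real_norm_def abs_mult
    by (intro mult_mono) (use assms[of n] in auto)
qed

lemma square_powers_tail_bound:
  fixes c :: "nat \<Rightarrow> real"
  assumes c: "\<And>n. \<bar>c n\<bar> \<le> C"
  shows "10^(N*N) * \<bar>\<Sum>n. c (n + Suc N) * (1/10)^((n + Suc N) * (n + Suc N))\<bar> \<le> C * (1/10)^N"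
proof -
  have C: "0 \<le> C" using c[of 0] by linarith
  define g where "g n = C * (1/10)^Suc N * (1/10::real)^n" for n
  have term_le: "\<bar>10^(N*N) * (c (n + Suc N) * (1/10)^((n + Suc N) * (n + Suc N)))\<bar> \<le> g n" for n
  proof -
    define m where "m = n + Suc N"
    \<comment> \<open>since \<open>m\<^sup>2 \<ge> N\<^sup>2 + m\<close>, the factor \<open>10^(N*N)\<close> is absorbed, leaving a geometric tail\<close>
    have "(10::real)^(N*N) * (1/10)^(m*m) \<le> 10^(N*N) * (1/10)^(N*N + m)"
      by (intro mult_left_mono power_decreasing) (auto simp: m_def algebra_simps)
    also have "\<dots> = (1/10)^m" by (simp add: power_add power_one_over)
    finally have "(10::real)^(N*N) * (1/10)^(m*m) \<le> (1/10)^m" .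
    then have "\<bar>c m\<bar> * ((10::real)^(N*N) * (1/10)^(m*m)) \<le> C * (1/10)^m"
      by (intro mult_mono c C) auto
    then show ?thesis
      by (simp add: g_def m_def abs_mult power_add algebra_simps)
  qed
  have "summable g" unfolding g_def by (intro summable_mult summable_geometric) auto
  then have abs_summable: "summable (\<lambda>n. \<bar>10^(N*N) * (c (n + Suc N) * (1/10)^((n + Suc N) * (n + Suc N)))\<bar>)"
    by (rule summable_comparison_test'[where N = 0]) (use term_le in auto)
  have "10^(N*N) * \<bar>\<Sum>n. c (n + Suc N) * (1/10)^((n + Suc N) * (n + Suc N))\<bar>
      = \<bar>\<Sum>n. 10^(N*N) * (c (n + Suc N) * (1/10)^((n + Suc N) * (n + Suc N)))\<bar>"
    using summable_ignore_initial_segment[OF summable_square_powers[of c C, OF c], where k = "Suc N"]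
    by (subst suminf_mult) (auto simp: abs_mult)
  also have "\<dots> \<le> (\<Sum>n. \<bar>10^(N*N) * (c (n + Suc N) * (1/10)^((n + Suc N) * (n + Suc N)))\<bar>)"
    using summable_norm[of "\<lambda>n. 10^(N*N) * (c (n + Suc N) * (1/10)^((n + Suc N) * (n + Suc N)))"]
      abs_summable by simp
  also have "\<dots> \<le> suminf g"
    by (rule suminf_le[OF term_le abs_summable \<open>summable g\<close>])
  also have "suminf g = C * (1/10)^Suc N * (10/9)"
    unfolding g_def using suminf_geometric[of "1/10::real"]
    by (subst suminf_mult) (auto simp: summable_geometric)
  also have "\<dots> \<le> C * (1/10)^N" using C by (simp add: field_simps)
  finally show ?thesis .
qed

lemma square_powers_sum_vanishing_prefix:
  fixes c :: "nat \<Rightarrow> real"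
  assumes c: "\<And>n. \<bar>c n\<bar> \<le> C" and zero: "\<And>n. n \<le> N \<Longrightarrow> c n = 0"
  shows "\<bar>\<Sum>n. c n * (1/10)^(n*n)\<bar> \<le> C * (1/10)^N"
proof -
  have "(\<Sum>n. c n * (1/10)^(n*n)) = (\<Sum>n. c (n + Suc N) * (1/10)^((n + Suc N) * (n + Suc N)))"
    using suminf_split_initial_segment[OF summable_square_powers[of c C, OF c], where k = "Suc N"] zero by simp
  moreover have "\<bar>t\<bar> \<le> 10^(N*N) * \<bar>t\<bar>" for t :: real
    using mult_right_mono[of 1 "10^(N*N)" "\<bar>t\<bar>"] by simp
  ultimately show ?thesis
    using square_powers_tail_bound[of c C N, OF c] by (metis order_trans)
qed

lemma square_powers_sum_bound:
  fixes c :: "nat \<Rightarrow> real"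
  assumes c: "\<And>n. \<bar>c n\<bar> \<le> C"
  shows "\<bar>\<Sum>n. c n * (1/10)^(n*n)\<bar> \<le> 2 * C"
proof -
  have "(\<Sum>n. c n * (1/10)^(n*n)) = (\<Sum>n. c (n + Suc 0) * (1/10)^((n + Suc 0) * (n + Suc 0))) + c 0"
    using suminf_split_initial_segment[OF summable_square_powers[of c C, OF c], where k = 1] by simp
  then show ?thesis
    using square_powers_tail_bound[of c C 0, OF c] c[of 0] by simp
qed

lemma square_powers_scaled_tail_in_Ints:
  fixes c :: "nat \<Rightarrow> int"
  defines "f \<equiv> \<lambda>n. real_of_int (c n) * (1/10)^(n*n)"
  assumes "summable f" and "real_of_int q * suminf f = real_of_int p"
  shows "real_of_int q * 10^(N*N) * (\<Sum>n. f (n + Suc N)) \<in> \<int>"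
proof -
  have prefix: "real_of_int q * 10^(N*N) * (\<Sum>i<Suc N. f i)
      = (\<Sum>i<Suc N. real_of_int (q * c i) * 10^(N*N - i*i))"
    unfolding sum_distrib_left
  proof (rule sum.cong[OF refl])
    fix i assume "i \<in> {..<Suc N}"
    then have "(10::real)^(N*N) = 10^(N*N - i*i) * 10^(i*i)"
      by (simp add: power_add[symmetric] mult_le_mono)
    then show "real_of_int q * 10^(N*N) * f i = real_of_int (q * c i) * 10^(N*N - i*i)"
      unfolding f_def by (simp add: power_one_over field_simps)
  qed
  have "(\<Sum>n. f (n + Suc N)) = suminf f - (\<Sum>i<Suc N. f i)"
    using suminf_split_initial_segment[OF \<open>summable f\<close>, where k = "Suc N"] by simp
  then have "real_of_int q * 10^(N*N) * (\<Sum>n. f (n + Suc N))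
      = real_of_int (p * 10^(N*N)) - real_of_int q * 10^(N*N) * (\<Sum>i<Suc N. f i)"
    using assms(3) by (simp add: right_diff_distrib mult.commute mult.left_commute)
  then show ?thesis unfolding prefix by (simp add: Ints_diff Ints_sum)
qed

text \<open>A Liouville-type argument: if \<open>p/q\<close> is the sum, the scaled tails \<open>q * 10^(N*N) * T N\<close> are
  integers of absolute value less than 1 for large \<open>N\<close>.\<close>
lemma square_powers_sum_rational_imp_eventually_zero:
  fixes c :: "nat \<Rightarrow> int"
  assumes c: "\<And>n. \<bar>real_of_int (c n)\<bar> \<le> C"
    and rat: "(\<Sum>n. real_of_int (c n) * (1/10)^(n*n)) \<in> \<rat>"
  shows "\<exists>N. \<forall>n\<ge>N. c n = 0"
proof -
  define f where "f n = real_of_int (c n) * (1/10)^(n*n)" for n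
  define T where "T N = (\<Sum>n. f (n + Suc N))" for N
  have sumf: "summable f" unfolding f_def by (rule summable_square_powers[of c C, OF c])
  obtain p q where q: "q > 0" "suminf f = real_of_int p / real_of_int q"
    using rat unfolding f_def[symmetric] by (metis Rats_cases')
  then have "real_of_int q * suminf f = real_of_int p" by simp
  then have T_int: "real_of_int q * 10^(N*N) * T N \<in> \<int>" for N
    using square_powers_scaled_tail_in_Ints[of c] sumf unfolding T_def f_def by blast
  have T_small: "\<bar>real_of_int q * 10^(N*N) * T N\<bar> \<le> real_of_int q * C * (1/10)^N" for N
    using square_powers_tail_bound[of c C N, OF c] q(1)
    unfolding T_def f_def abs_mult by (simp add: mult.assoc mult_left_mono)
  have "(\<lambda>N. real_of_int q * C * (1/10::real)^N) \<longlonglongrightarrow> 0"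
    by (rule tendsto_eq_intros LIMSEQ_power_zero | simp)+
  then obtain N1 where N1: "\<And>N. N \<ge> N1 \<Longrightarrow> real_of_int q * C * (1/10)^N < 1"
    by (metis (no_types, lifting) eventually_sequentially order_tendstoD(2) zero_less_one)
  have T_zero: "T N = 0" if "N \<ge> N1" for N
  proof -
    have "\<bar>real_of_int q * 10^(N*N) * T N\<bar> < 1" using T_small[of N] N1[OF that] by linarith
    then have "real_of_int q * 10^(N*N) * T N = 0"
      using T_int[of N] Ints_nonzero_abs_ge1 by fastforce
    then show ?thesis using q(1) by simp
  qed
  have c_Suc_zero: "c (Suc N) = 0" if "N \<ge> N1" for N
  proof -
    have "T N = f (Suc N) + T (Suc N)"
      using suminf_split_head[OF summable_ignore_initial_segment[OF sumf, of "Suc N"]]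
      unfolding T_def by simp
    then show ?thesis using T_zero that unfolding f_def by simp
  qed
  show ?thesis
  proof (intro exI allI impI)
    fix n assume "Suc N1 \<le> n"
    then obtain m where "n = Suc m" "m \<ge> N1" by (cases n) auto
    then show "c n = 0" using c_Suc_zero by simp
  qed
qed

section \<open>Comparing metrics on the same set\<close>

lemma Metric_space_mtopology_eqI:
  assumes D: "Metric_space M d" and E: "Metric_space M e"
    and de: "\<And>x r. x \<in> M \<Longrightarrow> r > 0 \<Longrightarrow> \<exists>s>0. \<forall>y\<in>M. d x y < s \<longrightarrow> e x y < r"
    and ed: "\<And>x r. x \<in> M \<Longrightarrow> r > 0 \<Longrightarrow> \<exists>s>0. \<forall>y\<in>M. e x y < s \<longrightarrow> d x y < r"
  shows "Metric_space.mtopology M d = Metric_space.mtopology M e"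
proof -
  have "continuous_map (Metric_space.mtopology M d) (Metric_space.mtopology M e) id"
    unfolding Metric_space.metric_continuous_map[OF D E] using de by fastforce
  moreover have "continuous_map (Metric_space.mtopology M e) (Metric_space.mtopology M d) id"
    unfolding Metric_space.metric_continuous_map[OF E D] using ed by fastforce
  ultimately show ?thesis
    unfolding topology_eq
    using topology_finer_continuous_id Metric_space.topspace_mtopology[OF D]
      Metric_space.topspace_mtopology[OF E] by metis
qed

lemma Metric_space_add:
  assumes "Metric_space M d" and "Metric_space M d'"
  shows "Metric_space M (\<lambda>x y. d x y + d' x y)"
proof -
  interpret D: Metric_space M d by fact
  interpret D': Metric_space M d' by fact
  show ?thesis
  proof
    fix x y z assume "x \<in> M" "y \<in> M" "z \<in> M"
    then show "d x z + d' x z \<le> d x y + d' x y + (d y z + d' y z)"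
      using D.triangle D'.triangle by (smt (verit))
  qed (auto simp: D.commute D'.commute add_nonneg_eq_0_iff)
qed

lemma mtopology_add_metric:
  assumes D: "Metric_space M d" and D': "Metric_space M d'"
    and top: "Metric_space.mtopology M d' = Metric_space.mtopology M d"
  shows "Metric_space.mtopology M (\<lambda>x y. d x y + d' x y) = Metric_space.mtopology M d"
proof (rule Metric_space_mtopology_eqI[OF Metric_space_add[OF D D'] D])
  interpret D: Metric_space M d by fact
  interpret D': Metric_space M d' by fact
  fix x and r :: real assume x: "x \<in> M" and r: "r > 0"
  show "\<exists>s>0. \<forall>y\<in>M. d x y + d' x y < s \<longrightarrow> d x y < r"
  proof (intro exI[of _ r] conjI ballI impI)
    fix y assume "d x y + d' x y < r"
    then show "d x y < r" using D'.nonneg[of x y] by linarith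
  qed (fact r)
  have "openin D.mtopology (D'.mball x (r/2))" using top by (metis D'.openin_mball)
  then obtain s where s: "s > 0" "D.mball x s \<subseteq> D'.mball x (r/2)"
    using x r unfolding D.openin_mtopology by (metis D'.centre_in_mball_iff half_gt_zero)
  show "\<exists>s>0. \<forall>y\<in>M. d x y < s \<longrightarrow> d x y + d' x y < r"
  proof (intro exI[of _ "min s (r/2)"] conjI ballI impI)
    fix y assume "y \<in> M" "d x y < min s (r/2)"
    then have "d' x y < r/2" using s x by auto
    with \<open>d x y < min s (r/2)\<close> show "d x y + d' x y < r" by linarith
  qed (use s r in auto)
qed

lemma mcomplete_add_metric:
  assumes D: "Metric_space M d" and D': "Metric_space M d'"
    and top: "Metric_space.mtopology M d' = Metric_space.mtopology M d"
    and complete: "Metric_space.mcomplete M d'"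
  shows "Metric_space.mcomplete M (\<lambda>x y. d x y + d' x y)"
proof -
  interpret D: Metric_space M d by fact
  interpret D': Metric_space M d' by fact
  interpret S: Metric_space M "\<lambda>x y. d x y + d' x y" by (rule Metric_space_add[OF D D'])
  show ?thesis unfolding S.mcomplete_def
  proof (intro allI impI)
    fix \<sigma> assume "S.MCauchy \<sigma>"
    then have "D'.MCauchy \<sigma>"
      unfolding S.MCauchy_def D'.MCauchy_def
      by (meson D.nonneg add_le_cancel_right le_add_same_cancel2 order_le_less_trans)
    then obtain x where "limitin D'.mtopology \<sigma> x sequentially"
      using complete unfolding D'.mcomplete_def by blast
    then show "\<exists>x. limitin S.mtopology \<sigma> x sequentially"
      using top mtopology_add_metric[OF D D' top] by auto
  qed
qed

lemma exists_complete_metric_nearby: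
  assumes D: "Metric_space M d" and R: "Metric_space M \<rho>"
    and top: "Metric_space.mtopology M \<rho> = Metric_space.mtopology M d"
    and complete: "Metric_space.mcomplete M \<rho>" and c: "c > 0"
  shows "\<exists>d'. Metric_space M d' \<and> Metric_space.mtopology M d' = Metric_space.mtopology M d \<and>
           Metric_space.mcomplete M d' \<and> (\<forall>x y. \<bar>d x y - d' x y\<bar> \<le> c)"
proof -
  interpret R: Metric_space M \<rho> by fact
  let ?\<rho>c = "R.capped_dist c"
  have Rc: "Metric_space M ?\<rho>c" by (rule R.capped_dist)
  have top_c: "Metric_space.mtopology M ?\<rho>c = Metric_space.mtopology M d"
    using top R.mtopology_capped_metric by simp
  have "\<bar>d x y - (d x y + ?\<rho>c x y)\<bar> \<le> c" for x y
    using c R.nonneg[of x y] by (simp add: R.capped_dist_def)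
  then show ?thesis
    using Metric_space_add[OF D Rc] mtopology_add_metric[OF D Rc top_c]
      mcomplete_add_metric[OF D Rc top_c] complete R.mcomplete_capped_metric
    by (intro exI[of _ "\<lambda>x y. d x y + ?\<rho>c x y"]) auto
qed

lemma sup_metric_dist_le_iff:
  "sup_metric_dist X d e \<le> ereal \<epsilon> \<longleftrightarrow> (\<forall>x\<in>topspace X. \<forall>y\<in>topspace X. \<bar>d x y - e x y\<bar> \<le> \<epsilon>)"
  unfolding sup_metric_dist_def by (auto simp: SUP_le_iff)

section \<open>Fine open partitions of strongly zero-dimensional metric spaces\<close>

definition (in Metric_space) fine_open_partition :: "real \<Rightarrow> ('a \<Rightarrow> 'a set) \<Rightarrow> bool" where
  "fine_open_partition \<delta> cell \<longleftrightarrow>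
     (\<forall>x\<in>M. x \<in> cell x \<and> cell x \<subseteq> M \<and> openin mtopology (cell x) \<and>
        (\<forall>y\<in>cell x. cell y = cell x \<and> d x y < \<delta>))"

text \<open>Choose for every point the least point, in a fixed well-order, within distance \<open>r\<close>.\<close>
lemma (in Metric_space) exists_coherent_centres:
  assumes "r > 0"
  obtains \<alpha> where "\<And>x. x \<in> M \<Longrightarrow> \<alpha> x \<in> M \<and> d (\<alpha> x) x < r"
    and "\<And>a b. a \<in> M \<Longrightarrow> b \<in> M \<Longrightarrow> d (\<alpha> a) b < r \<Longrightarrow> d (\<alpha> b) a < r \<Longrightarrow> \<alpha> a = \<alpha> b"
proof -
  obtain R :: "'a rel" where "Well_order R \<and> Field R = UNIV" using well_ordering by (rule exE)
  then have R: "Well_order R" "Field R = UNIV" by auto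
  interpret wo_rel R unfolding wo_rel_def using R by blast
  define \<alpha> where "\<alpha> x = minim {c\<in>M. d c x < r}" for x
  have near: "\<alpha> x \<in> {c\<in>M. d c x < r}" if "x \<in> M" for x
  proof -
    have "x \<in> {c\<in>M. d c x < r}" using that assms by simp
    then show ?thesis unfolding \<alpha>_def by (intro minim_in) (auto simp: R(2))
  qed
  have least: "(\<alpha> x, c) \<in> R" if "c \<in> M" "d c x < r" for x c
    unfolding \<alpha>_def by (rule minim_least) (use R(2) that in auto)
  show ?thesis
  proof
    show "\<alpha> x \<in> M \<and> d (\<alpha> x) x < r" if "x \<in> M" for x using near[OF that] by simp
    fix a b assume "a \<in> M" "b \<in> M" "d (\<alpha> a) b < r" "d (\<alpha> b) a < r"
    moreover have "\<alpha> a \<in> M" "\<alpha> b \<in> M" using near \<open>a \<in> M\<close> \<open>b \<in> M\<close> by blast+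
    ultimately have "(\<alpha> a, \<alpha> b) \<in> R" "(\<alpha> b, \<alpha> a) \<in> R" using least by blast+
    then show "\<alpha> a = \<alpha> b" using ANTISYM unfolding antisym_def by blast
  qed
qed

locale coherent_centres = Metric_space +
  fixes r :: real and \<alpha> :: "'a \<Rightarrow> 'a"
  assumes r_pos: "r > 0"
    and centre: "x \<in> M \<Longrightarrow> \<alpha> x \<in> M \<and> d (\<alpha> x) x < r"
    and centre_coherent: "a \<in> M \<Longrightarrow> b \<in> M \<Longrightarrow> d (\<alpha> a) b < r \<Longrightarrow> d (\<alpha> b) a < r \<Longrightarrow> \<alpha> a = \<alpha> b"
begin

definition radius :: "nat \<Rightarrow> real" where "radius n = r / (3 * real (Suc n))"

definition inner :: "nat \<Rightarrow> 'a set" where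
  "inner n = {a\<in>M. mball a (3 * radius n) \<subseteq> mball (\<alpha> a) r}"

definition halo :: "nat \<Rightarrow> 'a set" where
  "halo n = (\<Union>a\<in>inner n. mball a (3/2 * radius n))"

lemma radius_pos: "radius n > 0"
  using r_pos by (simp add: radius_def)

lemma inner_far_apart:
  assumes "a \<in> inner n" "b \<in> inner n" "\<alpha> a \<noteq> \<alpha> b"
  shows "3 * radius n \<le> d a b"
proof (rule ccontr)
  have M: "a \<in> M" "b \<in> M" using assms(1,2) by (auto simp: inner_def)
  assume "\<not> 3 * radius n \<le> d a b"
  then have "b \<in> mball a (3 * radius n)" "a \<in> mball b (3 * radius n)"
    using M by (auto simp: commute)
  then have "b \<in> mball (\<alpha> a) r" "a \<in> mball (\<alpha> b) r"
    using assms(1,2) unfolding inner_def by blast+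
  then have "\<alpha> a = \<alpha> b" using centre_coherent[OF M] by simp
  with assms(3) show False ..
qed

lemma halo_centre_unique:
  assumes "a \<in> inner n" "b \<in> inner n" "x \<in> mball a (3/2 * radius n)" "x \<in> mball b (3/2 * radius n)"
  shows "\<alpha> a = \<alpha> b"
proof (rule ccontr)
  assume "\<alpha> a \<noteq> \<alpha> b"
  have "d a b \<le> d a x + d x b" using assms(3,4) by (simp add: triangle)
  also have "\<dots> < 3 * radius n" using assms(3,4) by (simp add: commute[of x b])
  finally show False using inner_far_apart[OF assms(1,2) \<open>\<alpha> a \<noteq> \<alpha> b\<close>] by linarith
qed

lemma halo_near_centre:
  assumes "a \<in> inner n" "x \<in> mball a (3/2 * radius n)"
  shows "d x (\<alpha> a) < r"
proof -
  have "mball a (3/2 * radius n) \<subseteq> mball a (3 * radius n)"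
    using radius_pos by (intro mball_subset_concentric) auto
  then have "x \<in> mball (\<alpha> a) r" using assms unfolding inner_def by blast
  then show ?thesis by (simp add: commute)
qed

lemma closure_subset_halo:
  "mtopology closure_of (\<Union>a\<in>inner n. mball a (radius n)) \<subseteq> halo n"
proof
  fix y assume "y \<in> mtopology closure_of (\<Union>a\<in>inner n. mball a (radius n))"
  then have "y \<in> M \<and>
      (\<forall>T. y \<in> T \<and> openin mtopology T \<longrightarrow> (\<exists>z. z \<in> (\<Union>a\<in>inner n. mball a (radius n)) \<and> z \<in> T))"
    unfolding in_closure_of topspace_mtopology by assumption
  then have y: "y \<in> M"
    and touch: "\<forall>T. y \<in> T \<and> openin mtopology T \<longrightarrow> (\<exists>z. z \<in> (\<Union>a\<in>inner n. mball a (radius n)) \<and> z \<in> T)"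
    by blast+
  have "y \<in> mball y (radius n / 2)" using y radius_pos[of n] by simp
  then obtain z where z: "z \<in> (\<Union>a\<in>inner n. mball a (radius n))" "z \<in> mball y (radius n / 2)"
    using touch openin_mball by blast
  then obtain a where a: "a \<in> inner n" "z \<in> mball a (radius n)" by auto
  have "d a y \<le> d a z + d z y" using a z by (auto intro: triangle)
  then have "d a y < 3/2 * radius n" using a z by (auto simp: commute)
  then have "y \<in> mball a (3/2 * radius n)" using a(1) y by (simp add: inner_def)
  then show "y \<in> halo n" using a(1) unfolding halo_def by blast
qed

lemma inner_cover:
  assumes "x \<in> M" shows "\<exists>n. x \<in> inner n"
proof -
  have "x \<in> mball (\<alpha> x) r" using centre assms by (simp add: commute)
  then obtain s where s: "s > 0" "mball x s \<subseteq> mball (\<alpha> x) r"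
    using openin_mball unfolding openin_mtopology by blast
  obtain n :: nat where "r / s < real n" using reals_Archimedean2 by blast
  then have "r < s * real (Suc n)" using s(1) by (simp add: pos_divide_less_eq algebra_simps)
  have "3 * radius n = r / real (Suc n)" by (simp add: radius_def field_simps)
  also have "\<dots> < s" using \<open>r < s * real (Suc n)\<close> by (simp add: pos_divide_less_eq)
  finally have "mball x (3 * radius n) \<subseteq> mball (\<alpha> x) r"
    using s(2) by (meson order_trans less_imp_le mball_subset_concentric)
  then have "x \<in> inner n" using assms by (simp add: inner_def)
  then show ?thesis ..
qed

end

text \<open>Stone's construction: a point's cell is fixed by the first clopen layer containing it
  and by the centre of the scale-\<open>n\<close> ball it lies in; within a layer these balls are grouped
  by centre into pieces that are far apart, so cells are open.\<close>
locale clopen_layers = coherent_centres +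
  fixes V :: "nat \<Rightarrow> 'a set"
  assumes layer_open: "openin mtopology (V n)" and layer_closed: "closedin mtopology (V n)"
    and closure_subset_layer: "mtopology closure_of (\<Union>a\<in>inner n. mball a (radius n)) \<subseteq> V n"
    and layer_subset_halo: "V n \<subseteq> halo n"
begin

definition level :: "'a \<Rightarrow> nat" where "level x = (LEAST n. x \<in> V n)"

definition centre_of :: "'a \<Rightarrow> 'a" where
  "centre_of x = \<alpha> (SOME a. a \<in> inner (level x) \<and> x \<in> mball a (3/2 * radius (level x)))"

definition cell :: "'a \<Rightarrow> 'a set" where
  "cell x = {y\<in>M. level y = level x \<and> centre_of y = centre_of x}"

lemma in_layer_level:
  assumes "x \<in> M" shows "x \<in> V (level x)"
proof -
  obtain n where "x \<in> inner n" using inner_cover[OF assms] ..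
  then have "x \<in> (\<Union>a\<in>inner n. mball a (radius n))" using assms radius_pos[of n] by auto
  moreover have "(\<Union>a\<in>inner n. mball a (radius n)) \<subseteq> topspace mtopology"
    by (auto simp: mball_subset_mspace)
  ultimately have "x \<in> V n"
    using closure_subset_layer closure_of_subset by blast
  then show ?thesis unfolding level_def by (rule LeastI)
qed

lemma not_in_layer_below_level: "i < level x \<Longrightarrow> x \<notin> V i"
  unfolding level_def by (rule not_less_Least)

lemma level_eqI: "x \<in> V n \<Longrightarrow> (\<And>i. i < n \<Longrightarrow> x \<notin> V i) \<Longrightarrow> level x = n"
  unfolding level_def by (rule Least_equality) (auto simp: not_le[symmetric])

lemma centre_of_witness:
  assumes "x \<in> M"
  obtains a where "a \<in> inner (level x)" "x \<in> mball a (3/2 * radius (level x))" "centre_of x = \<alpha> a"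
proof -
  have "x \<in> halo (level x)" using in_layer_level[OF assms] layer_subset_halo by blast
  then have "\<exists>a. a \<in> inner (level x) \<and> x \<in> mball a (3/2 * radius (level x))"
    unfolding halo_def by blast
  from someI_ex[OF this] show ?thesis using that unfolding centre_of_def by blast
qed

lemma centre_of_eq:
  assumes "x \<in> M" "a \<in> inner (level x)" "x \<in> mball a (3/2 * radius (level x))"
  shows "centre_of x = \<alpha> a"
proof -
  obtain b where "b \<in> inner (level x)" "x \<in> mball b (3/2 * radius (level x))" "centre_of x = \<alpha> b"
    using centre_of_witness[OF assms(1)] .
  then show ?thesis using halo_centre_unique assms(2,3) by metis
qed

lemma openin_cell:
  assumes "x \<in> M" shows "openin mtopology (cell x)"
  unfolding openin_subopen[of _ "cell x"]
proof
  fix y assume y: "y \<in> cell x"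
  then have "y \<in> M" by (simp add: cell_def)
  define n where "n = level y"
  obtain a where a: "a \<in> inner n" "y \<in> mball a (3/2 * radius n)" "centre_of y = \<alpha> a"
    using centre_of_witness[OF \<open>y \<in> M\<close>] unfolding n_def .
  define G where "G = V n \<inter> mball a (3/2 * radius n) - (\<Union>i<n. V i)"
  have "openin mtopology G"
    unfolding G_def using layer_open layer_closed by (intro openin_diff openin_Int closedin_Union) auto
  moreover have "y \<in> G"
    unfolding G_def n_def using in_layer_level[OF \<open>y \<in> M\<close>] a(2) not_in_layer_below_level
    by (auto simp: n_def)
  moreover have "G \<subseteq> cell x"
  proof
    fix z assume z: "z \<in> G"
    then have "z \<in> M" "level z = n" unfolding G_def by (auto intro: level_eqI)
    moreover have "centre_of z = \<alpha> a"
      using centre_of_eq[of z a] z a(1) \<open>level z = n\<close> \<open>z \<in> M\<close> unfolding G_def by auto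
    ultimately show "z \<in> cell x" using y a(3) unfolding cell_def n_def by auto
  qed
  ultimately show "\<exists>T. openin mtopology T \<and> y \<in> T \<and> T \<subseteq> cell x" by blast
qed

lemma cell_diameter:
  assumes "x \<in> M" "y \<in> cell x" shows "d x y < 2 * r"
proof -
  have "y \<in> M" using assms(2) by (simp add: cell_def)
  obtain a where a: "a \<in> inner (level x)" "x \<in> mball a (3/2 * radius (level x))" "centre_of x = \<alpha> a"
    using centre_of_witness[OF assms(1)] .
  obtain b where b: "b \<in> inner (level y)" "y \<in> mball b (3/2 * radius (level y))" "centre_of y = \<alpha> b"
    using centre_of_witness[OF \<open>y \<in> M\<close>] .
  have "\<alpha> a = \<alpha> b" using a(3) b(3) assms(2) by (simp add: cell_def)
  have "d x y \<le> d x (\<alpha> a) + d (\<alpha> a) y"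
    using assms(1) \<open>y \<in> M\<close> centre a(1) by (intro triangle) (auto simp: inner_def)
  also have "\<dots> < 2 * r"
    using halo_near_centre[OF a(1,2)] halo_near_centre[OF b(1,2)] \<open>\<alpha> a = \<alpha> b\<close>
    by (simp add: commute)
  finally show ?thesis .
qed

lemma fine_open_partition_cell: "fine_open_partition (2 * r) cell"
  unfolding fine_open_partition_def
  using openin_cell cell_diameter by (auto simp: cell_def)

end

lemma (in Metric_space) strongly_zero_dimensional_imp_fine_open_partition:
  assumes sz: "strongly_zero_dimensional mtopology" and "\<delta> > 0"
  shows "\<exists>cell. fine_open_partition \<delta> cell"
proof -
  have r: "\<delta> / 2 > 0" using \<open>\<delta> > 0\<close> by simp
  obtain \<alpha> where "\<And>x. x \<in> M \<Longrightarrow> \<alpha> x \<in> M \<and> d (\<alpha> x) x < \<delta> / 2"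
    and "\<And>a b. a \<in> M \<Longrightarrow> b \<in> M \<Longrightarrow> d (\<alpha> a) b < \<delta> / 2 \<Longrightarrow> d (\<alpha> b) a < \<delta> / 2 \<Longrightarrow> \<alpha> a = \<alpha> b"
    using exists_coherent_centres[OF r] by blast
  then interpret coherent_centres M d "\<delta> / 2" \<alpha> by unfold_locales (use r in auto)
  have "\<exists>W. openin mtopology W \<and> closedin mtopology W \<and>
          mtopology closure_of (\<Union>a\<in>inner n. mball a (radius n)) \<subseteq> W \<and> W \<subseteq> halo n" for n
  proof -
    have "openin mtopology (halo n)" unfolding halo_def by auto
    then have "closedin mtopology (M - halo n)" by (metis closedin_diff closedin_mspace)
    moreover have "mtopology closure_of (\<Union>a\<in>inner n. mball a (radius n)) \<inter> (M - halo n) = {}"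
      using closure_subset_halo by blast
    ultimately obtain W where "openin mtopology W" "closedin mtopology W"
        "mtopology closure_of (\<Union>a\<in>inner n. mball a (radius n)) \<subseteq> W" "W \<inter> (M - halo n) = {}"
      using sz unfolding strongly_zero_dimensional_def by (metis closedin_closure_of)
    then show ?thesis using openin_subset by fastforce
  qed
  then obtain V where "\<And>n. openin mtopology (V n) \<and> closedin mtopology (V n) \<and>
          mtopology closure_of (\<Union>a\<in>inner n. mball a (radius n)) \<subseteq> V n \<and> V n \<subseteq> halo n"
    by metis
  then interpret clopen_layers M d "\<delta> / 2" \<alpha> V by unfold_locales auto
  show ?thesis using fine_open_partition_cell by auto
qed

section \<open>Bits of pairs of reals\<close>

definition rat_enum :: "nat \<Rightarrow> real" where "rat_enum k = of_rat (from_nat k)"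

definition pair_bit :: "nat \<Rightarrow> real \<times> real \<Rightarrow> bool" where
  "pair_bit j p \<longleftrightarrow> (if even j then fst p else snd p) < rat_enum (j div 2)"

lemma pair_bit_even [simp]: "pair_bit (2 * k) p \<longleftrightarrow> fst p < rat_enum k"
  by (simp add: pair_bit_def)

lemma pair_bit_odd [simp]: "pair_bit (Suc (2 * k)) p \<longleftrightarrow> snd p < rat_enum k"
  by (simp add: pair_bit_def)

lemma rat_enum_in_interval_infinitely_often:
  assumes "lo < hi" shows "\<exists>k\<ge>k0. lo < rat_enum k \<and> rat_enum k < hi"
proof (rule ccontr)
  assume none: "\<not> ?thesis"
  define T where "T = {q\<in>\<rat>. lo < q \<and> q < hi}"
  have "T \<subseteq> rat_enum ` {..<k0}"
  proof
    fix q assume q: "q \<in> T"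
    then obtain s where "q = of_rat s" unfolding T_def using Rats_cases by blast
    then have enum: "rat_enum (to_nat s) = q" by (simp add: rat_enum_def)
    have "to_nat s < k0"
    proof (rule ccontr)
      assume "\<not> to_nat s < k0"
      then show False using none q enum unfolding T_def by auto
    qed
    with enum show "q \<in> rat_enum ` {..<k0}" by blast
  qed
  then have "finite T" by (rule finite_subset) simp
  moreover obtain q0 where "q0 \<in> T" using Rats_dense_in_real[OF assms] unfolding T_def by blast
  ultimately have "Min T \<in> T" by (intro Min_in) auto
  then obtain q1 where q1: "q1 \<in> \<rat>" "lo < q1" "q1 < Min T" using Rats_dense_in_real unfolding T_def by blast
  then have "q1 \<in> T" using \<open>Min T \<in> T\<close> unfolding T_def by auto
  then have "Min T \<le> q1" using \<open>finite T\<close> by simp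
  with q1(3) show False by simp
qed

lemma exists_pair_bit_value: "\<exists>j\<ge>j0. pair_bit j p = b"
proof (cases b)
  case True
  obtain k where "k \<ge> j0" "fst p < rat_enum k"
    using rat_enum_in_interval_infinitely_often[of "fst p" "fst p + 1" j0] by auto
  with True show ?thesis by (intro exI[of _ "2 * k"]) auto
next
  case False
  obtain k where "k \<ge> j0" "rat_enum k < fst p"
    using rat_enum_in_interval_infinitely_often[of "fst p - 1" "fst p" j0] by auto
  with False show ?thesis by (intro exI[of _ "2 * k"]) auto
qed

lemma exists_pair_bit_diff:
  assumes "p \<noteq> q" shows "\<exists>j\<ge>j0. pair_bit j p \<noteq> pair_bit j q"
proof -
  have real_bit_diff: "\<exists>k\<ge>j0. (a < rat_enum k) \<noteq> (b < rat_enum k)" if "a \<noteq> b" for a b :: real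
  proof (cases "a < b")
    case True
    then show ?thesis using rat_enum_in_interval_infinitely_often[of a b j0] by auto
  next
    case False
    then show ?thesis using that rat_enum_in_interval_infinitely_often[of b a j0] by auto
  qed
  show ?thesis
  proof (cases "fst p = fst q")
    case True
    then have "snd p \<noteq> snd q" using assms by (simp add: prod_eq_iff)
    then obtain k where "k \<ge> j0" "(snd p < rat_enum k) \<noteq> (snd q < rat_enum k)" using real_bit_diff by blast
    then show ?thesis by (intro exI[of _ "Suc (2 * k)"]) auto
  next
    case False
    then obtain k where "k \<ge> j0" "(fst p < rat_enum k) \<noteq> (fst q < rat_enum k)" using real_bit_diff by blast
    then show ?thesis by (intro exI[of _ "2 * k"]) auto
  qed
qed

section \<open>A metric with rationally independent distances\<close>

lemma min_max_pair_eqD: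
  fixes a b a' b' :: "'a :: linorder"
  assumes "(min a b, max a b) = (min a' b', max a' b')"
  shows "(a = a' \<and> b = b') \<or> (a = b' \<and> b = a')"
  using assms by (auto simp: min_def max_def split: if_splits)

lemma rat_lin_indep2I_int:
  assumes "\<And>P Q :: int. of_int P * r + of_int Q * s = 0 \<Longrightarrow> P = 0 \<and> Q = 0"
  shows "rat_lin_indep2 r s"
  unfolding rat_lin_indep2_def
proof (intro allI impI)
  fix a b :: rat assume rel: "of_rat a * r + of_rat b * s = 0"
  obtain A D where AD: "quotient_of a = (A, D)" by fastforce
  obtain B E where BE: "quotient_of b = (B, E)" by fastforce
  have pos: "D > 0" "E > 0" using quotient_of_denom_pos AD BE by blast+
  have "(of_rat a :: real) = of_int A / of_int D" "(of_rat b :: real) = of_int B / of_int E"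
    using quotient_of_div[OF AD] quotient_of_div[OF BE] by (simp_all add: of_rat_divide)
  then have "of_int (A * E) * r + of_int (B * D) * s = of_int (D * E) * (of_rat a * r + of_rat b * s)"
    using pos by (simp add: field_simps)
  with rel have "of_int (A * E) * r + of_int (B * D) * s = 0" by simp
  then have "A * E = 0 \<and> B * D = 0" by (rule assms)
  then show "a = 0 \<and> b = 0" using pos quotient_of_div[OF AD] quotient_of_div[OF BE] by auto
qed

lemma int_combination_of_digits_eq_zero:
  fixes P Q a b a' b' :: int
  assumes "a \<in> {1, 2}" "b \<in> {1, 2}" "a \<noteq> b" "b' \<in> {1, 2}" "a' = 3 - a"
    and "P * a + Q * b = 0" "P * a' + Q * b' = 0"
  shows "P = 0 \<and> Q = 0"
  using assms by auto

locale lin_indep_construction = Metric_space +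
  fixes cell :: "nat \<Rightarrow> 'a \<Rightarrow> 'a set" and label :: "'a \<Rightarrow> real" and \<epsilon> :: real and K :: nat
  assumes cell_partition: "fine_open_partition (\<epsilon> / (8 * real (Suc n))) (cell n)"
    and label_inj: "inj_on label M"
    and eps_pos: "\<epsilon> > 0"
    and K_small: "(1/10::real)^K \<le> \<epsilon>/8"
begin

lemma in_cell: "x \<in> M \<Longrightarrow> x \<in> cell n x"
  and cell_subset: "x \<in> M \<Longrightarrow> cell n x \<subseteq> M"
  and openin_cell: "x \<in> M \<Longrightarrow> openin mtopology (cell n x)"
  and cell_eq: "x \<in> M \<Longrightarrow> y \<in> cell n x \<Longrightarrow> cell n y = cell n x"
  and cell_small: "x \<in> M \<Longrightarrow> y \<in> cell n x \<Longrightarrow> d x y < \<epsilon> / (8 * real (Suc n))"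
  using cell_partition[of n] unfolding fine_open_partition_def by blast+

lemma cell_eq_iff: "x \<in> M \<Longrightarrow> y \<in> M \<Longrightarrow> cell n x = cell n y \<longleftrightarrow> y \<in> cell n x"
  using in_cell[of y n] cell_eq[of x y n] by auto

lemma exists_mesh_below:
  assumes "r > 0" shows "\<exists>N. \<epsilon> / (8 * real (Suc N)) < r"
proof -
  obtain N :: nat where "\<epsilon> / (8 * r) < real N" using reals_Archimedean2 by blast
  then have "\<epsilon> / (8 * real (Suc N)) < r" using assms eps_pos by (simp add: field_simps)
  then show ?thesis ..
qed

lemma different_cells_if_far:
  assumes "x \<in> M" "y \<in> M" "\<epsilon> / (8 * real (Suc N)) \<le> d x y"
  shows "cell N x \<noteq> cell N y"
  using cell_eq_iff cell_small assms by fastforce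

definition rep :: "nat \<Rightarrow> 'a \<Rightarrow> 'a" where "rep n x = (SOME z. z \<in> cell n x)"

definition label_pair :: "nat \<Rightarrow> 'a \<Rightarrow> 'a \<Rightarrow> real \<times> real" where
  "label_pair n x y = (min (label (rep n x)) (label (rep n y)), max (label (rep n x)) (label (rep n y)))"

definition separated :: "nat \<Rightarrow> 'a \<Rightarrow> 'a \<Rightarrow> bool" where
  "separated n x y \<longleftrightarrow> (\<exists>i\<le>n. cell i x \<noteq> cell i y)"

definition digit :: "nat \<Rightarrow> 'a \<Rightarrow> 'a \<Rightarrow> int" where
  "digit n x y =
     (if separated n x y
      then (if pair_bit (snd (prod_decode n)) (label_pair (fst (prod_decode n)) x y) then 2 else 1)
      else 0)"

definition digit_sum :: "'a \<Rightarrow> 'a \<Rightarrow> real" where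
  "digit_sum x y = (\<Sum>n. real_of_int (digit n x y) * (1/10)^(n*n))"

text \<open>Rounding up by between \<open>\<epsilon>/8\<close> and \<open>\<epsilon>/4\<close>: the two roundings on the right of a triangle
  inequality absorb the one on the left.\<close>
definition rat_above :: "real \<Rightarrow> real" where
  "rat_above s = (SOME q. q \<in> \<rat> \<and> s + \<epsilon>/8 \<le> q \<and> q \<le> s + \<epsilon>/4)"

definition coarse_dist :: "'a \<Rightarrow> 'a \<Rightarrow> real" where
  "coarse_dist x y = (if cell 0 x = cell 0 y then 0 else rat_above (d (rep 0 x) (rep 0 y)))"

definition li_dist :: "'a \<Rightarrow> 'a \<Rightarrow> real" where
  "li_dist x y = coarse_dist x y + (1/10)^K * digit_sum x y"

lemma rep_in_cell: "x \<in> M \<Longrightarrow> rep n x \<in> cell n x"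
  unfolding rep_def by (rule someI) (rule in_cell)

lemma rep_in_M: "x \<in> M \<Longrightarrow> rep n x \<in> M"
  using rep_in_cell cell_subset by blast

lemma rep_eq_iff: "x \<in> M \<Longrightarrow> y \<in> M \<Longrightarrow> rep n x = rep n y \<longleftrightarrow> cell n x = cell n y"
  by (metis cell_eq rep_def rep_in_cell)

lemma separated_sym: "separated n x y \<longleftrightarrow> separated n y x"
  unfolding separated_def by metis

lemma separated_mono: "separated N x y \<Longrightarrow> N \<le> n \<Longrightarrow> separated n x y"
  unfolding separated_def by (meson order_trans)

lemma separated_if_far:
  "x \<in> M \<Longrightarrow> y \<in> M \<Longrightarrow> \<epsilon> / (8 * real (Suc N)) \<le> d x y \<Longrightarrow> separated N x y"
  unfolding separated_def using different_cells_if_far by blast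

lemma eventually_separated:
  assumes "x \<in> M" "y \<in> M" "x \<noteq> y" shows "\<exists>N. separated N x y"
proof -
  have "d x y > 0" using assms by simp
  then obtain N where "\<epsilon> / (8 * real (Suc N)) < d x y" using exists_mesh_below by blast
  then have "separated N x y" using assms by (intro separated_if_far) auto
  then show ?thesis ..
qed

lemma digit_sym: "digit n x y = digit n y x"
  unfolding digit_def label_pair_def using separated_sym by (simp add: min.commute max.commute)

lemma digit_range: "digit n x y \<in> {0, 1, 2}"
  by (simp add: digit_def)

lemma digit_nonneg: "0 \<le> digit n x y"
  by (simp add: digit_def)

lemma digit_abs_le: "\<bar>real_of_int (digit n x y)\<bar> \<le> 2"
  using digit_range[of n x y] by auto

lemma digit_separated: "separated n x y \<Longrightarrow> digit n x y \<in> {1, 2}"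
  by (simp add: digit_def)

lemma digit_not_separated: "\<not> separated n x y \<Longrightarrow> digit n x y = 0"
  by (simp add: digit_def)

lemma digit_prod_encode:
  "separated (prod_encode (m, j)) x y \<Longrightarrow>
     digit (prod_encode (m, j)) x y = (if pair_bit j (label_pair m x y) then 2 else 1)"
  by (simp add: digit_def)

lemma digit_cong_left:
  assumes "\<not> separated n x x'" shows "digit n x y = digit n x' y"
proof -
  have same: "\<forall>i\<le>n. cell i x = cell i x'" using assms unfolding separated_def by blast
  then have "separated n x y = separated n x' y" unfolding separated_def by auto
  moreover have "rep (fst (prod_decode n)) x = rep (fst (prod_decode n)) x'"
    using same le_prod_encode_1[of "fst (prod_decode n)" "snd (prod_decode n)"] by (simp add: rep_def)
  ultimately show ?thesis by (simp add: digit_def label_pair_def)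
qed

lemma digit_triangle: "digit n x z \<le> digit n x y + digit n y z"
proof (cases "separated n x y")
  case True
  show ?thesis
  proof (cases "separated n y z")
    case True
    with \<open>separated n x y\<close> show ?thesis
      using digit_separated[of n x y] digit_separated[of n y z] digit_range[of n x z] by auto
  next
    case False
    then show ?thesis using digit_cong_left[of n z y x] digit_sym separated_sym digit_range[of n x y]
      by (metis add.right_neutral digit_not_separated order_refl)
  qed
next
  case False
  then show ?thesis using digit_cong_left[OF False, of z] digit_range[of n x y] by auto
qed

lemma summable_digit_sum: "summable (\<lambda>n. real_of_int (digit n x y) * (1/10)^(n*n))"
  using summable_square_powers[of "\<lambda>n. real_of_int (digit n x y)" 2] digit_abs_le by blast

lemma digit_sum_nonneg: "0 \<le> digit_sum x y"
  unfolding digit_sum_def by (intro suminf_nonneg[OF summable_digit_sum]) (simp add: digit_nonneg)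

lemma digit_sum_sym: "digit_sum x y = digit_sum y x"
  unfolding digit_sum_def using digit_sym by simp

lemma digit_sum_triangle: "digit_sum x z \<le> digit_sum x y + digit_sum y z"
proof -
  have "real_of_int (digit n x z) * (1/10)^(n*n)
      \<le> real_of_int (digit n x y) * (1/10)^(n*n) + real_of_int (digit n y z) * (1/10)^(n*n)" for n
  proof -
    have "real_of_int (digit n x z) \<le> real_of_int (digit n x y) + real_of_int (digit n y z)"
      using digit_triangle[of n x z y] by (simp flip: of_int_add)
    then show ?thesis by (simp add: mult_right_mono flip: distrib_right)
  qed
  then show ?thesis
    unfolding digit_sum_def suminf_add[OF summable_digit_sum summable_digit_sum]
    by (intro suminf_le summable_add summable_digit_sum)
qed

lemma digit_sum_le: "digit_sum x y \<le> 4"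
  using square_powers_sum_bound[of "\<lambda>n. real_of_int (digit n x y)" 2] digit_abs_le
  unfolding digit_sum_def by fastforce

lemma digit_sum_le_if_same_cells:
  assumes "\<forall>i\<le>N. cell i x = cell i y" shows "digit_sum x y \<le> 2 * (1/10)^N"
proof -
  have "digit n x y = 0" if "n \<le> N" for n
    using assms that by (intro digit_not_separated) (auto simp: separated_def)
  then show ?thesis
    using square_powers_sum_vanishing_prefix[of "\<lambda>n. real_of_int (digit n x y)" 2 N] digit_abs_le
    unfolding digit_sum_def by fastforce
qed

lemma digit_sum_ge_if_separated:
  assumes "separated N x y" shows "(1/10)^(N*N) \<le> digit_sum x y"
proof -
  have "(\<Sum>n\<in>{N}. real_of_int (digit n x y) * (1/10)^(n*n)) \<le> digit_sum x y"
    unfolding digit_sum_def by (intro sum_le_suminf[OF summable_digit_sum]) (auto simp: digit_nonneg)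
  then have single: "real_of_int (digit N x y) * (1/10)^(N*N) \<le> digit_sum x y" by simp
  have "1 \<le> real_of_int (digit N x y)" using digit_separated[OF assms] by auto
  then have "(1/10)^(N*N) \<le> real_of_int (digit N x y) * (1/10::real)^(N*N)"
    using mult_right_mono[of 1 "real_of_int (digit N x y)" "(1/10::real)^(N*N)"] by simp
  then show ?thesis using single by (rule order_trans)
qed

lemma rat_above: "rat_above s \<in> \<rat> \<and> s + \<epsilon>/8 \<le> rat_above s \<and> rat_above s \<le> s + \<epsilon>/4"
proof -
  obtain q where "q \<in> \<rat>" "s + \<epsilon>/8 < q" "q < s + \<epsilon>/4"
    using Rats_dense_in_real[of "s + \<epsilon>/8" "s + \<epsilon>/4"] eps_pos by auto
  then have "\<exists>q. q \<in> \<rat> \<and> s + \<epsilon>/8 \<le> q \<and> q \<le> s + \<epsilon>/4" by (intro exI[of _ q]) auto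
  then show ?thesis unfolding rat_above_def by (rule someI_ex)
qed

lemma coarse_dist_nonneg: "0 \<le> coarse_dist x y"
proof -
  have "0 \<le> rat_above (d (rep 0 x) (rep 0 y))"
    using rat_above[of "d (rep 0 x) (rep 0 y)"] eps_pos nonneg[of "rep 0 x" "rep 0 y"] by linarith
  then show ?thesis by (simp add: coarse_dist_def)
qed

lemma coarse_dist_sym: "coarse_dist x y = coarse_dist y x"
  by (auto simp: coarse_dist_def commute)

lemma coarse_dist_rational: "coarse_dist x y \<in> \<rat>"
  using rat_above by (simp add: coarse_dist_def)

lemma coarse_dist_triangle:
  assumes "x \<in> M" "y \<in> M" "z \<in> M" shows "coarse_dist x z \<le> coarse_dist x y + coarse_dist y z"
proof (cases "cell 0 x = cell 0 z")
  case True then show ?thesis using coarse_dist_nonneg[of x y] coarse_dist_nonneg[of y z]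
    by (simp add: coarse_dist_def)
next
  case xz: False
  consider "cell 0 x = cell 0 y" | "cell 0 y = cell 0 z" | "cell 0 x \<noteq> cell 0 y" "cell 0 y \<noteq> cell 0 z"
    by blast
  then show ?thesis
  proof cases
    case 1
    then show ?thesis using coarse_dist_nonneg[of x y] by (simp add: coarse_dist_def rep_def)
  next
    case 2
    then show ?thesis using coarse_dist_nonneg[of y z] by (simp add: coarse_dist_def rep_def)
  next
    case 3
    have "rep 0 x \<in> M" "rep 0 y \<in> M" "rep 0 z \<in> M" using rep_in_M assms by auto
    then have "d (rep 0 x) (rep 0 z) \<le> d (rep 0 x) (rep 0 y) + d (rep 0 y) (rep 0 z)" by (rule triangle)
    then show ?thesis
      using xz 3 rat_above[of "d (rep 0 x) (rep 0 z)"] rat_above[of "d (rep 0 x) (rep 0 y)"]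
        rat_above[of "d (rep 0 y) (rep 0 z)"] eps_pos
      by (simp add: coarse_dist_def)
  qed
qed

lemma coarse_dist_close:
  assumes "x \<in> M" "y \<in> M" shows "\<bar>coarse_dist x y - d x y\<bar> \<le> \<epsilon>/2"
proof (cases "cell 0 x = cell 0 y")
  case True
  then have "d x y < \<epsilon>/8" using cell_small[OF assms(1), of y 0] cell_eq_iff assms by auto
  then show ?thesis using True eps_pos by (simp add: coarse_dist_def)
next
  case False
  define a b where "a = rep 0 x" and "b = rep 0 y"
  have ab: "a \<in> M" "b \<in> M" using rep_in_M assms by (auto simp: a_def b_def)
  have "d x a < \<epsilon>/8" "d y b < \<epsilon>/8"
    using cell_small[OF assms(1) rep_in_cell[OF assms(1)], of 0] cell_small[OF assms(2) rep_in_cell[OF assms(2)], of 0]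
    by (simp_all add: a_def b_def)
  moreover have "d x y \<le> d x a + d a b + d b y" "d a b \<le> d a x + d x y + d y b"
    using triangle assms ab by (smt (verit))+
  moreover have "coarse_dist x y = rat_above (d a b)" using False by (simp add: coarse_dist_def a_def b_def)
  ultimately show ?thesis
    using rat_above[of "d a b"] commute[of x a] commute[of y b] unfolding abs_le_iff by linarith
qed

lemma Metric_space_li_dist: "Metric_space M li_dist"
proof
  fix x y show "0 \<le> li_dist x y"
    using coarse_dist_nonneg digit_sum_nonneg by (simp add: li_dist_def)
  show "li_dist x y = li_dist y x"
    using coarse_dist_sym digit_sum_sym by (simp add: li_dist_def)
next
  fix x y assume "x \<in> M" "y \<in> M"
  show "li_dist x y = 0 \<longleftrightarrow> x = y"
  proof
    assume "li_dist x y = 0"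
    show "x = y"
    proof (rule ccontr)
      assume "x \<noteq> y"
      then obtain N where "separated N x y" using eventually_separated \<open>x \<in> M\<close> \<open>y \<in> M\<close> by blast
      then have "(1/10)^(N*N) \<le> digit_sum x y" by (rule digit_sum_ge_if_separated)
      then have "0 < digit_sum x y" using zero_less_power[of "1/10::real" "N*N"] by linarith
      then show False
        using \<open>li_dist x y = 0\<close> coarse_dist_nonneg[of x y] by (simp add: li_dist_def add_nonneg_eq_0_iff)
    qed
  qed (simp add: li_dist_def coarse_dist_def digit_sum_def digit_def separated_def)
next
  fix x y z assume "x \<in> M" "y \<in> M" "z \<in> M"
  have "(1/10)^K * digit_sum x z \<le> (1/10)^K * digit_sum x y + (1/10::real)^K * digit_sum y z"
    using digit_sum_triangle[of x z y] by (simp add: mult_left_mono flip: distrib_left)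
  then show "li_dist x z \<le> li_dist x y + li_dist y z"
    using coarse_dist_triangle[OF \<open>x \<in> M\<close> \<open>y \<in> M\<close> \<open>z \<in> M\<close>] unfolding li_dist_def by linarith
qed

lemma li_dist_small_imp_d_small:
  assumes "x \<in> M" "y \<in> M" "li_dist x y < (1/10)^K * (1/10)^(N*N)"
  shows "d x y < \<epsilon> / (8 * real (Suc N))"
proof (rule ccontr)
  assume "\<not> ?thesis"
  then have "separated N x y" using separated_if_far assms by simp
  then have "(1/10)^(N*N) \<le> digit_sum x y" by (rule digit_sum_ge_if_separated)
  then have "(1/10::real)^K * (1/10)^(N*N) \<le> (1/10)^K * digit_sum x y" by (rule mult_left_mono) simp
  then show False using assms(3) coarse_dist_nonneg[of x y] unfolding li_dist_def by linarith
qed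

lemma li_dist_small_if_same_cells:
  assumes "\<forall>i\<le>N. cell i x = cell i y" shows "li_dist x y \<le> 2 * (1/10)^N"
proof -
  have "coarse_dist x y = 0" using assms by (simp add: coarse_dist_def)
  moreover have "(1/10::real)^K * digit_sum x y \<le> digit_sum x y"
    using digit_sum_nonneg[of x y] by (simp add: mult_left_le_one_le power_le_one)
  ultimately show ?thesis using digit_sum_le_if_same_cells[OF assms] by (simp add: li_dist_def)
qed

lemma mtopology_li_dist: "Metric_space.mtopology M li_dist = mtopology"
proof (rule Metric_space_mtopology_eqI[OF Metric_space_li_dist Metric_space_axioms])
  fix x and r :: real assume "x \<in> M" "r > 0"
  obtain N where N: "\<epsilon> / (8 * real (Suc N)) < r" using exists_mesh_below[OF \<open>r > 0\<close>] ..
  show "\<exists>s>0. \<forall>y\<in>M. li_dist x y < s \<longrightarrow> d x y < r"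
  proof (intro exI[of _ "(1/10)^K * (1/10)^(N*N)"] conjI ballI impI)
    fix y assume "y \<in> M" "li_dist x y < (1/10)^K * (1/10)^(N*N)"
    then have "d x y < \<epsilon> / (8 * real (Suc N))" using li_dist_small_imp_d_small \<open>x \<in> M\<close> by blast
    then show "d x y < r" using N by linarith
  qed simp
next
  fix x and r :: real assume x: "x \<in> M" and "r > 0"
  obtain N where "(1/10::real)^N < r/2"
    using real_arch_pow_inv[of "r/2" "1/10"] \<open>r > 0\<close> by auto
  then have N: "2 * (1/10::real)^N < r" by simp
  have "openin mtopology (\<Inter>i\<le>N. cell i x)" using openin_cell[OF x] by (intro openin_INT2) auto
  moreover have "x \<in> (\<Inter>i\<le>N. cell i x)" using in_cell[OF x] by auto
  ultimately obtain s where "s > 0" "mball x s \<subseteq> (\<Inter>i\<le>N. cell i x)"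
    unfolding openin_mtopology by blast
  have "li_dist x y < r" if "y \<in> M" "d x y < s" for y
  proof -
    have "y \<in> (\<Inter>i\<le>N. cell i x)" using that \<open>mball x s \<subseteq> (\<Inter>i\<le>N. cell i x)\<close> x by auto
    then have "\<forall>i\<le>N. cell i x = cell i y" using cell_eq_iff[OF x that(1)] by auto
    then show ?thesis using li_dist_small_if_same_cells N by (meson le_less_trans)
  qed
  then show "\<exists>s>0. \<forall>y\<in>M. d x y < s \<longrightarrow> li_dist x y < r" using \<open>s > 0\<close> by blast
qed

lemma li_dist_close: assumes "x \<in> M" "y \<in> M" shows "\<bar>d x y - li_dist x y\<bar> \<le> \<epsilon>"
proof -
  have "(1/10::real)^K * digit_sum x y \<le> \<epsilon>/8 * 4"
    using K_small digit_sum_le[of x y] digit_sum_nonneg[of x y] eps_pos by (intro mult_mono) auto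
  moreover have "0 \<le> (1/10::real)^K * digit_sum x y" using digit_sum_nonneg[of x y] by simp
  ultimately show ?thesis
    using coarse_dist_close[OF assms] unfolding li_dist_def abs_le_iff by linarith
qed

lemma mcomplete_li_dist:
  assumes "mcomplete" shows "Metric_space.mcomplete M li_dist"
proof -
  interpret L: Metric_space M li_dist by (rule Metric_space_li_dist)
  show ?thesis unfolding L.mcomplete_def
  proof (intro allI impI)
    fix \<sigma> assume C: "L.MCauchy \<sigma>"
    have "MCauchy \<sigma>" unfolding MCauchy_def
    proof (intro conjI allI impI)
      show "range \<sigma> \<subseteq> M" using C L.MCauchy_def by blast
      fix r :: real assume "r > 0"
      obtain N where N: "\<epsilon> / (8 * real (Suc N)) < r" using exists_mesh_below[OF \<open>r > 0\<close>] ..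
      have "(0::real) < (1/10)^K * (1/10)^(N*N)" by simp
      then obtain N' where N': "\<forall>n n'. N' \<le> n \<longrightarrow> N' \<le> n' \<longrightarrow> li_dist (\<sigma> n) (\<sigma> n') < (1/10)^K * (1/10)^(N*N)"
        using C unfolding L.MCauchy_def by blast
      show "\<exists>N. \<forall>n n'. N \<le> n \<longrightarrow> N \<le> n' \<longrightarrow> d (\<sigma> n) (\<sigma> n') < r"
      proof (intro exI[of _ N'] allI impI)
        fix n n' assume "N' \<le> n" "N' \<le> n'"
        then have "li_dist (\<sigma> n) (\<sigma> n') < (1/10)^K * (1/10)^(N*N)" using N' by blast
        then have "d (\<sigma> n) (\<sigma> n') < \<epsilon> / (8 * real (Suc N))"
          using li_dist_small_imp_d_small \<open>range \<sigma> \<subseteq> M\<close> by blast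
        then show "d (\<sigma> n) (\<sigma> n') < r" using N by linarith
      qed
    qed
    then obtain x where "limitin mtopology \<sigma> x sequentially" using assms unfolding mcomplete_def by blast
    then show "\<exists>x. limitin L.mtopology \<sigma> x sequentially" using mtopology_li_dist by auto
  qed
qed

lemma exists_digit_value:
  assumes "x \<in> M" "y \<in> M" "x \<noteq> y" "b \<in> {1, 2}"
  shows "\<exists>n\<ge>n0. digit n x y = b"
proof -
  obtain N where N: "separated N x y" using eventually_separated assms by blast
  obtain j where j: "j \<ge> n0" "pair_bit j (label_pair N x y) = (b = 2)"
    using exists_pair_bit_value by blast
  define n where "n = prod_encode (N, j)"
  have "n \<ge> N" "n \<ge> j" unfolding n_def using le_prod_encode_1 le_prod_encode_2 by auto
  then have "n \<ge> n0" "separated n x y" using j(1) N separated_mono by auto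
  moreover from \<open>separated n x y\<close> have "digit n x y = b"
    using j(2) assms(4) digit_prod_encode[of N j x y] unfolding n_def by auto
  ultimately show ?thesis by blast
qed

lemma label_pair_neq:
  assumes "x \<in> M" "y \<in> M" "u \<in> M" "v \<in> M" "z \<in> {x, y}"
    and "cell N z \<noteq> cell N u" "cell N z \<noteq> cell N v"
  shows "label_pair N x y \<noteq> label_pair N u v"
proof
  assume "label_pair N x y = label_pair N u v"
  then have "label (rep N z) = label (rep N u) \<or> label (rep N z) = label (rep N v)"
    using min_max_pair_eqD assms(5) unfolding label_pair_def by blast
  then have "rep N z = rep N u \<or> rep N z = rep N v"
    using label_inj rep_in_M assms(1-5) unfolding inj_on_def by blast
  then show False using rep_eq_iff assms by blast
qed

lemma exists_digit_diff:
  assumes M: "x \<in> M" "y \<in> M" "u \<in> M" "v \<in> M"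
    and ne: "x \<noteq> y" "u \<noteq> v" "{x, y} \<noteq> {u, v}"
  shows "\<exists>n\<ge>n0. separated n x y \<and> separated n u v \<and> digit n x y \<noteq> digit n u v"
proof -
  obtain z where z: "z \<in> {x, y}" "z \<notin> {u, v}" using ne by blast
  have "z \<in> M" using z M by auto
  have "0 < min (min (d z u) (d z v)) (min (d x y) (d u v))" using z M ne \<open>z \<in> M\<close> by auto
  then obtain N where N: "\<epsilon> / (8 * real (Suc N)) < min (min (d z u) (d z v)) (min (d x y) (d u v))"
    using exists_mesh_below by blast
  have sep: "separated N x y" "separated N u v" using M N by (auto intro: separated_if_far)
  have "cell N z \<noteq> cell N u" "cell N z \<noteq> cell N v"
    using different_cells_if_far[of z u N] different_cells_if_far[of z v N] \<open>z \<in> M\<close> M N by auto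
  then have "label_pair N x y \<noteq> label_pair N u v" using label_pair_neq M z(1) by blast
  then obtain j where j: "j \<ge> n0" "pair_bit j (label_pair N x y) \<noteq> pair_bit j (label_pair N u v)"
    using exists_pair_bit_diff by blast
  define n where "n = prod_encode (N, j)"
  have "n \<ge> N" "n \<ge> j" unfolding n_def using le_prod_encode_1 le_prod_encode_2 by auto
  then have "n \<ge> n0" "separated n x y" "separated n u v" using j(1) sep separated_mono by auto
  moreover from this have "digit n x y \<noteq> digit n u v"
    using j(2) digit_prod_encode[of N j x y] digit_prod_encode[of N j u v] unfolding n_def by auto
  ultimately show ?thesis by blast
qed

lemma int_combination_digit_sums_rational:
  assumes "of_int P * li_dist x y + of_int Q * li_dist u v = 0"
  shows "(\<Sum>n. real_of_int (P * digit n x y + Q * digit n u v) * (1/10)^(n*n)) \<in> \<rat>"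
proof -
  have "(\<Sum>n. real_of_int (P * digit n x y + Q * digit n u v) * (1/10)^(n*n))
      = of_int P * digit_sum x y + of_int Q * digit_sum u v"
    unfolding digit_sum_def
    by (subst suminf_mult[OF summable_digit_sum, symmetric])+
       (subst suminf_add[OF summable_mult summable_mult, OF summable_digit_sum summable_digit_sum];
        simp add: algebra_simps)
  also have "\<dots> = - (of_int P * coarse_dist x y + of_int Q * coarse_dist u v) / (1/10)^K"
  proof -
    have "of_int P * coarse_dist x y + of_int Q * coarse_dist u v
        + (1/10)^K * (of_int P * digit_sum x y + of_int Q * digit_sum u v) = 0"
      using assms unfolding li_dist_def by (simp add: algebra_simps)
    then show ?thesis by (simp add: eq_divide_eq algebra_simps; linarith)
  qed
  also have "\<dots> \<in> \<rat>" using coarse_dist_rational by simp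
  finally show ?thesis .
qed

lemma rat_lin_indep2_li_dist:
  assumes M: "x \<in> M" "y \<in> M" "u \<in> M" "v \<in> M"
    and ne: "x \<noteq> y" "u \<noteq> v" "{x, y} \<noteq> {u, v}"
  shows "rat_lin_indep2 (li_dist x y) (li_dist u v)"
proof (rule rat_lin_indep2I_int)
  fix P Q :: int assume rel: "of_int P * li_dist x y + of_int Q * li_dist u v = 0"
  define c where "c n = P * digit n x y + Q * digit n u v" for n
  have bound: "\<bar>real_of_int (c n)\<bar> \<le> 2 * \<bar>of_int P\<bar> + 2 * \<bar>of_int Q\<bar>" for n
  proof -
    have "\<bar>c n\<bar> \<le> \<bar>P\<bar> * \<bar>digit n x y\<bar> + \<bar>Q\<bar> * \<bar>digit n u v\<bar>"
      unfolding c_def by (metis abs_mult abs_triangle_ineq)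
    also have "\<dots> \<le> \<bar>P\<bar> * 2 + \<bar>Q\<bar> * 2"
      using digit_range[of n x y] digit_range[of n u v] by (intro add_mono mult_left_mono) auto
    finally show ?thesis by linarith
  qed
  have "(\<Sum>n. real_of_int (c n) * (1/10)^(n*n)) \<in> \<rat>"
    using int_combination_digit_sums_rational[OF rel] unfolding c_def .
  then obtain N0 where N0: "\<forall>n\<ge>N0. c n = 0"
    using square_powers_sum_rational_imp_eventually_zero bound by blast
  obtain n1 where n1: "n1 \<ge> N0" "separated n1 x y" "separated n1 u v" "digit n1 x y \<noteq> digit n1 u v"
    using exists_digit_diff[OF M ne] by blast
  obtain Nuv where "separated Nuv u v" using eventually_separated M ne by blast
  have "3 - digit n1 x y \<in> {1, 2}" using digit_separated[OF n1(2)] by auto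
  then obtain n2 where n2: "n2 \<ge> max N0 Nuv" "digit n2 x y = 3 - digit n1 x y"
    using exists_digit_value[OF M(1,2) ne(1)] by blast
  have "separated n2 u v" using separated_mono[OF \<open>separated Nuv u v\<close>] n2(1) by simp
  show "P = 0 \<and> Q = 0"
  proof (rule int_combination_of_digits_eq_zero)
    show "digit n1 x y \<in> {1, 2}" "digit n1 u v \<in> {1, 2}" "digit n2 u v \<in> {1, 2}"
      using digit_separated n1(2,3) \<open>separated n2 u v\<close> by blast+
    show "P * digit n1 x y + Q * digit n1 u v = 0" "P * digit n2 x y + Q * digit n2 u v = 0"
      using N0 n1(1) n2(1) unfolding c_def by auto
  qed (use n1(4) n2(2) in auto)
qed

end

lemma (in Metric_space) exists_lin_indep_metric_nearby:
  assumes sz: "strongly_zero_dimensional mtopology" and card: "M \<lesssim> (UNIV :: real set)"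
    and "\<epsilon> > 0"
  obtains e where "Metric_space M e" "Metric_space.mtopology M e = mtopology"
    "\<And>x y. x \<in> M \<Longrightarrow> y \<in> M \<Longrightarrow> \<bar>d x y - e x y\<bar> \<le> \<epsilon>"
    "\<And>x y u v. \<lbrakk>x \<in> M; y \<in> M; u \<in> M; v \<in> M; x \<noteq> y; u \<noteq> v; {x, y} \<noteq> {u, v}\<rbrakk>
       \<Longrightarrow> rat_lin_indep2 (e x y) (e u v)"
    "mcomplete \<Longrightarrow> Metric_space.mcomplete M e"
proof -
  have "\<forall>n. \<exists>cell. fine_open_partition (\<epsilon> / (8 * real (Suc n))) cell"
    using strongly_zero_dimensional_imp_fine_open_partition[OF sz] \<open>\<epsilon> > 0\<close> by simp
  then obtain cell where "\<And>n. fine_open_partition (\<epsilon> / (8 * real (Suc n))) (cell n)"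
    by metis
  moreover obtain label :: "'a \<Rightarrow> real" where "inj_on label M" using card unfolding lepoll_def by blast
  moreover obtain K where "(1/10::real)^K < \<epsilon>/8"
    using real_arch_pow_inv[of "\<epsilon>/8" "1/10"] \<open>\<epsilon> > 0\<close> by auto
  ultimately interpret lin_indep_construction M d cell label \<epsilon> K
    using \<open>\<epsilon> > 0\<close> by unfold_locales auto
  show ?thesis
    using that Metric_space_li_dist mtopology_li_dist li_dist_close rat_lin_indep2_li_dist mcomplete_li_dist
    by blast
qed

lemma Met_imp_exists_LI_nearby:
  assumes sz: "strongly_zero_dimensional X" and card: "topspace X \<lesssim> (UNIV :: real set)"
    and d: "d \<in> Met X" and "\<epsilon> > 0"
  shows "\<exists>e \<in> LI X. sup_metric_dist X d e \<le> ereal \<epsilon> \<and>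
           (Metric_space.mcomplete (topspace X) d \<longrightarrow> Metric_space.mcomplete (topspace X) e)"
proof -
  interpret Metric_space "topspace X" d using d by (simp add: Met_def)
  have top: "mtopology = X" using d by (simp add: Met_def)
  obtain e where "Metric_space (topspace X) e" "Metric_space.mtopology (topspace X) e = mtopology"
    "\<And>x y. x \<in> topspace X \<Longrightarrow> y \<in> topspace X \<Longrightarrow> \<bar>d x y - e x y\<bar> \<le> \<epsilon>"
    "\<And>x y u v. \<lbrakk>x \<in> topspace X; y \<in> topspace X; u \<in> topspace X; v \<in> topspace X;
       x \<noteq> y; u \<noteq> v; {x, y} \<noteq> {u, v}\<rbrakk> \<Longrightarrow> rat_lin_indep2 (e x y) (e u v)"
    "mcomplete \<Longrightarrow> Metric_space.mcomplete (topspace X) e"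
    using exists_lin_indep_metric_nearby[OF _ card \<open>\<epsilon> > 0\<close>] sz top by metis
  then show ?thesis
    using top by (intro bexI[of _ e]) (auto simp: LI_def Met_def sup_metric_dist_le_iff)
qed

lemma completely_metrizable_imp_exists_complete_LI_nearby:
  assumes "completely_metrizable_space X" and sz: "strongly_zero_dimensional X"
    and card: "topspace X \<lesssim> (UNIV :: real set)" and "d \<in> Met X" "\<epsilon> > 0"
  shows "\<exists>e \<in> LI X. sup_metric_dist X d e \<le> ereal \<epsilon> \<and> Metric_space.mcomplete (topspace X) e"
proof -
  obtain \<rho> where \<rho>: "Metric_space (topspace X) \<rho>" "Metric_space.mcomplete (topspace X) \<rho>"
    "Metric_space.mtopology (topspace X) \<rho> = X"
    using assms(1) unfolding completely_metrizable_space_def by (metis Metric_space.topspace_mtopology)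
  obtain d' where d': "Metric_space (topspace X) d'" "Metric_space.mtopology (topspace X) d' = X"
    "Metric_space.mcomplete (topspace X) d'" "\<And>x y. \<bar>d x y - d' x y\<bar> \<le> \<epsilon>/2"
    using exists_complete_metric_nearby[OF _ \<rho>(1) _ \<rho>(2), of d "\<epsilon>/2"] \<rho>(3) assms(4,5)
    by (auto simp: Met_def)
  then obtain e where e: "e \<in> LI X" "sup_metric_dist X d' e \<le> ereal (\<epsilon>/2)"
    "Metric_space.mcomplete (topspace X) e"
    using Met_imp_exists_LI_nearby[OF sz card, of d' "\<epsilon>/2"] assms(5) by (auto simp: Met_def)
  have "\<bar>d x y - e x y\<bar> \<le> \<epsilon>" if "x \<in> topspace X" "y \<in> topspace X" for x y
  proof -
    have "\<bar>d' x y - e x y\<bar> \<le> \<epsilon>/2" using e(2) that unfolding sup_metric_dist_le_iff by blast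
    then show ?thesis using d'(4)[of x y] by linarith
  qed
  then show ?thesis using e(1,3) unfolding sup_metric_dist_le_iff by blast
qed

theorem theorem1p1:
  fixes X :: "'a topology"
  assumes "metrizable_space X"
    and "strongly_zero_dimensional X"
    and "topspace X \<lesssim> (UNIV :: real set)"
  shows "(\<forall>d \<in> Met X. \<forall>\<epsilon>::real. \<epsilon> > 0 \<longrightarrow>
            (\<exists>e \<in> LI X. sup_metric_dist X d e \<le> ereal \<epsilon>))
       \<and> (completely_metrizable_space X \<longrightarrow>
           (\<forall>d \<in> Met X. \<forall>\<epsilon>::real. \<epsilon> > 0 \<longrightarrow>
              (\<exists>e \<in> LI X. sup_metric_dist X d e \<le> ereal \<epsilon> \<and>
                 Metric_space.mcomplete (topspace X) e)))"
  using Met_imp_exists_LI_nearby[OF assms(2,3)]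
    completely_metrizable_imp_exists_complete_LI_nearby[OF _ assms(2,3)]
  by blast

end
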